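(* Let $A_1,\dots,A_m\in\mathbb{C}^{n\times n}$ be Hermitian matrices. There exists $P\in\mathrm{GL}_n(\mathbb{C})$ such that $P^*A_iP$ is diagonal for every $1\le i\le m$ if and only if $Z(A_1,\dots,A_m)$ contains $n$ nonzero matrices $\epsilon_1,\dots,\epsilon_n$ with $\epsilon_j^2=\epsilon_j$, $\epsilon_j\epsilon_l=0$ for $j\neq l$, and $\epsilon_1+\cdots+\epsilon_n=I_n$.
   Context: For Hermitian $A_1,\dots,A_m\in\mathbb{C}^{n\times n}$, the center is $Z(A_1,\dots,A_m)=\{X\in\mathbb{C}^{n\times n} : (A_iX)^*=A_iX \text{ for all } i\}$, where $^*$ denotes conjugate transpose. *)

theory Defs
  imports "HOL-Analysis.Analysis"
begin

definition ctrans :: "complex^'n^'n \<Rightarrow> complex^'n^'n" where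
  "ctrans A = (\<chi> i j. cnj (A $ j $ i))"

definition hermitian :: "complex^'n^'n \<Rightarrow> bool" where
  "hermitian A \<longleftrightarrow> ctrans A = A"

definition diagonal_mat :: "complex^'n^'n \<Rightarrow> bool" where
  "diagonal_mat A \<longleftrightarrow> (\<forall>i j. i \<noteq> j \<longrightarrow> A $ i $ j = 0)"

definition center :: "nat \<Rightarrow> (nat \<Rightarrow> complex^'n^'n) \<Rightarrow> (complex^'n^'n) set" where
  "center m A = {X. \<forall>i<m. ctrans (A i ** X) = A i ** X}"

end

theory Submission
  imports Defs
begin

text \<open>
  If \<open>P\<^sup>* A\<^sub>i P = D\<^sub>i\<close> is diagonal for all \<open>i\<close>, the conjugates \<open>\<epsilon>\<^sub>j = P E\<^sub>j P\<^sup>-\<^sup>1\<close> of the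
  diagonal matrix units form a complete family of orthogonal idempotents, and
  \<open>A\<^sub>i \<epsilon>\<^sub>j = (P\<^sup>-\<^sup>1)\<^sup>* (D\<^sub>i E\<^sub>j) P\<^sup>-\<^sup>1\<close> is Hermitian because \<open>D\<^sub>i E\<^sub>j\<close> is a real diagonal
  matrix. Conversely, given orthogonal nonzero idempotents \<open>\<epsilon>\<^sub>j\<close> in the center,
  let \<open>P\<close> have as \<open>j\<close>-th column a nonzero column of \<open>\<epsilon>\<^sub>j\<close>. Then \<open>\<epsilon>\<^sub>j P = P E\<^sub>j\<close>, which
  makes \<open>P\<close> invertible, and for \<open>k \<noteq> j\<close> the \<open>(k,j)\<close> entry of \<open>P\<^sup>* A\<^sub>i P\<close> is read off
  from \<open>(\<epsilon>\<^sub>k P)\<^sup>* A\<^sub>i (\<epsilon>\<^sub>j P) = P\<^sup>* \<epsilon>\<^sub>k\<^sup>* (A\<^sub>i \<epsilon>\<^sub>j)\<^sup>* P = P\<^sup>* (A\<^sub>i \<epsilon>\<^sub>j \<epsilon>\<^sub>k)\<^sup>* P = 0\<close>,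
  where \<open>A\<^sub>i \<epsilon>\<^sub>j\<close> is Hermitian because \<open>\<epsilon>\<^sub>j\<close> lies in the center.
\<close>

definition mat_unit :: "'n \<Rightarrow> 'a::semiring_1^'n^'n" where
  "mat_unit j = (\<chi> r s. if r = j \<and> s = j then 1 else 0)"

lemma matrix_mult_mat_unit_entry:
  "((M::'a::semiring_1^'n^'m) ** mat_unit j) $ r $ s = (if s = j then M $ r $ j else 0)"
  by (simp add: matrix_matrix_mult_def mat_unit_def if_distrib if_distribR cong: if_cong)

lemma mat_unit_mult_entry:
  "(mat_unit j ** (M::'a::semiring_1^'m^'n)) $ r $ s = (if r = j then M $ j $ s else 0)"
  by (simp add: matrix_matrix_mult_def mat_unit_def if_distrib if_distribR cong: if_cong)

lemma mat_unit_idem: "mat_unit j ** mat_unit j = (mat_unit j :: 'a::semiring_1^'n^'n)"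
  by (simp add: vec_eq_iff matrix_mult_mat_unit_entry) (simp add: mat_unit_def)

lemma mat_unit_orthogonal: "j \<noteq> l \<Longrightarrow> mat_unit j ** mat_unit l = (0 :: 'a::semiring_1^'n^'n)"
  by (simp add: vec_eq_iff matrix_mult_mat_unit_entry) (simp add: mat_unit_def)

lemma mat_unit_neq_0: "mat_unit j \<noteq> (0 :: 'a::semiring_1^'n^'n)"
  by (simp add: vec_eq_iff mat_unit_def)

lemma mat_unit_sandwich_entry:
  "(P ** mat_unit j ** Q) $ r $ s = P $ r $ j * (Q $ j $ s :: 'a::semiring_1)"
proof -
  have "(P ** mat_unit j ** Q) $ r $ s = (\<Sum>k\<in>UNIV. (P ** mat_unit j) $ r $ k * Q $ k $ s)"
    by (simp add: matrix_matrix_mult_def[of "P ** mat_unit j"])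
  then show ?thesis
    by (simp add: matrix_mult_mat_unit_entry if_distrib[of "\<lambda>x. x * _"] cong: if_cong)
qed

lemma sum_mat_unit_sandwich:
  "(\<Sum>j\<in>UNIV. P ** mat_unit j ** Q) = P ** (Q :: 'a::comm_semiring_1^'n^'n)"
  by (simp add: vec_eq_iff sum_component mat_unit_sandwich_entry)
     (simp add: matrix_matrix_mult_def)

lemma diagonal_mult_mat_unit:
  "diagonal_mat D \<Longrightarrow> D ** mat_unit j = mat_unit j ** D ** mat_unit j"
  by (simp add: vec_eq_iff matrix_mult_mat_unit_entry mat_unit_mult_entry diagonal_mat_def)

lemma ctrans_mult: "ctrans (A ** B) = ctrans B ** ctrans A"
  by (simp add: vec_eq_iff ctrans_def matrix_matrix_mult_def mult.commute)

lemma ctrans_ctrans [simp]: "ctrans (ctrans A) = A"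
  by (simp add: vec_eq_iff ctrans_def)

lemma ctrans_0 [simp]: "ctrans 0 = 0"
  by (simp add: vec_eq_iff ctrans_def)

lemma ctrans_mat_1 [simp]: "ctrans (mat 1) = mat 1"
  by (simp add: vec_eq_iff ctrans_def mat_def)

lemma ctrans_mat_unit [simp]: "ctrans (mat_unit j) = mat_unit j"
  by (simp add: vec_eq_iff ctrans_def mat_unit_def)

lemma hermitian_congruence: "hermitian X \<Longrightarrow> hermitian (ctrans Q ** X ** Q)"
  by (simp add: hermitian_def ctrans_mult matrix_mul_assoc)

lemma hermitian_diagonal_mult_mat_unit:
  assumes "hermitian D" and "diagonal_mat D"
  shows "hermitian (D ** mat_unit j)"
  using assms by (simp add: hermitian_def diagonal_mult_mat_unit ctrans_mult matrix_mul_assoc mat_unit_idem)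

lemma mem_center_iff: "X \<in> center m A \<longleftrightarrow> (\<forall>i<m. hermitian (A i ** X))"
  by (simp add: center_def hermitian_def)

lemma conjugated_mat_units:
  fixes P Q :: "complex^'n^'n"
  assumes PQ: "P ** Q = mat 1" and QP: "Q ** P = mat 1"
  defines "e j \<equiv> P ** mat_unit j ** Q"
  shows "e j ** e j = e j" and "j \<noteq> l \<Longrightarrow> e j ** e l = 0" and "e j \<noteq> 0"
    and "(\<Sum>j\<in>UNIV. e j) = mat 1"
proof -
  have e_mult: "e j ** e l = P ** (mat_unit j ** mat_unit l) ** Q" for j l
    by (simp add: e_def matrix_mul_assoc) (simp add: QP flip: matrix_mul_assoc)
  show "e j ** e j = e j"
    using e_mult[of j j] by (simp add: mat_unit_idem e_def)
  show "j \<noteq> l \<Longrightarrow> e j ** e l = 0"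
    by (simp add: e_mult mat_unit_orthogonal)
  have "Q ** e j ** P = mat_unit j"
    by (simp add: e_def matrix_mul_assoc) (simp add: QP flip: matrix_mul_assoc)
  then show "e j \<noteq> 0"
    using mat_unit_neq_0 by force
  show "(\<Sum>j\<in>UNIV. e j) = mat 1"
    by (simp add: e_def sum_mat_unit_sandwich PQ)
qed

lemma conjugated_mat_unit_in_center:
  fixes A P Q :: "complex^'n^'n"
  assumes "hermitian A" and PQ: "P ** Q = mat 1" and QP: "Q ** P = mat 1"
    and "diagonal_mat (ctrans P ** A ** P)"
  shows "hermitian (A ** (P ** mat_unit j ** Q))"
proof -
  define D where "D = ctrans P ** A ** P"
  have "hermitian D"
    using \<open>hermitian A\<close> hermitian_congruence by (simp add: D_def)
  have "ctrans Q ** D ** Q = ctrans (P ** Q) ** A ** (P ** Q)"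
    by (simp add: D_def ctrans_mult matrix_mul_assoc)
  then have "A = ctrans Q ** D ** Q"
    by (simp add: PQ)
  then have "A ** (P ** mat_unit j ** Q) = ctrans Q ** (D ** mat_unit j) ** Q"
    by (simp add: matrix_mul_assoc) (simp add: QP flip: matrix_mul_assoc)
  then show ?thesis
    using hermitian_diagonal_mult_mat_unit[OF \<open>hermitian D\<close>] assms(4)
    by (simp add: D_def hermitian_congruence)
qed

lemma center_idempotents_if_congruence_diagonal:
  fixes A :: "nat \<Rightarrow> complex^'n^'n"
  assumes "\<forall>i<m. hermitian (A i)"
    and "invertible P" and "\<forall>i<m. diagonal_mat (ctrans P ** A i ** P)"
  shows "\<exists>\<epsilon> :: 'n \<Rightarrow> complex^'n^'n.
            (\<forall>j. \<epsilon> j \<in> center m A \<and> \<epsilon> j \<noteq> 0 \<and> \<epsilon> j ** \<epsilon> j = \<epsilon> j)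
          \<and> (\<forall>j l. j \<noteq> l \<longrightarrow> \<epsilon> j ** \<epsilon> l = 0)
          \<and> (\<Sum>j\<in>UNIV. \<epsilon> j) = mat 1"
proof -
  obtain Q where PQ: "P ** Q = mat 1" and QP: "Q ** P = mat 1"
    using \<open>invertible P\<close> unfolding invertible_def by blast
  show ?thesis
    using conjugated_mat_units[OF PQ QP] conjugated_mat_unit_in_center[OF _ PQ QP] assms(1,3)
    by (intro exI[of _ "\<lambda>j. P ** mat_unit j ** Q"]) (simp add: mem_center_iff)
qed

lemma idempotent_columns_intertwine:
  fixes e :: "'n \<Rightarrow> 'a::semiring_1^'n^'n" and c :: "'n \<Rightarrow> 'n"
  assumes idem: "\<forall>j. e j ** e j = e j" and orth: "\<forall>j l. j \<noteq> l \<longrightarrow> e j ** e l = 0"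
  defines "P \<equiv> \<chi> r j. e j $ r $ c j"
  shows "e k ** P = P ** mat_unit k"
proof -
  have "(e k ** P) $ r $ s = (e k ** e s) $ r $ c s" for r s
    by (simp add: matrix_matrix_mult_def P_def)
  then show ?thesis
    using idem orth by (simp add: vec_eq_iff matrix_mult_mat_unit_entry) (simp add: P_def)
qed

lemma invertible_if_intertwines_mat_units:
  fixes P :: "'a::field^'n^'n"
  assumes intertwine: "\<And>k. e k ** P = P ** mat_unit k" and columns: "\<And>k. \<exists>r. P $ r $ k \<noteq> 0"
  shows "invertible P"
  unfolding invertible_left_inverse matrix_left_invertible_ker
proof (intro allI impI)
  fix x assume Px: "P *v x = 0"
  have "P $ r $ k * x $ k = 0" for r k
  proof -
    have "(P ** mat_unit k) *v x = e k *v (P *v x)"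
      by (simp add: intertwine matrix_vector_mul_assoc)
    then have "((P ** mat_unit k) *v x) $ r = 0"
      by (simp add: Px)
    then show ?thesis
      by (simp add: matrix_vector_mult_def matrix_mult_mat_unit_entry
          if_distrib[of "\<lambda>x. x * _"] cong: if_cong)
  qed
  moreover have "x $ k = 0" if "\<And>r. P $ r $ k * x $ k = 0" for k
    using columns[of k] that by auto
  ultimately show "x = 0"
    by (simp add: vec_eq_iff)
qed

lemma diagonal_congruence_if_intertwines:
  fixes A P :: "complex^'n^'n"
  assumes intertwine: "\<And>k. e k ** P = P ** mat_unit k"
    and orth: "\<forall>j l. j \<noteq> l \<longrightarrow> e j ** e l = 0" and center: "\<And>j. hermitian (A ** e j)"
  shows "diagonal_mat (ctrans P ** A ** P)"
  unfolding diagonal_mat_def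
proof (intro allI impI)
  fix k j :: 'n assume "k \<noteq> j"
  have "mat_unit k ** (ctrans P ** A ** P) ** mat_unit j = ctrans (e k ** P) ** A ** (e j ** P)"
    by (simp add: intertwine ctrans_mult matrix_mul_assoc)
  also have "\<dots> = ctrans P ** ctrans (e k) ** ctrans (A ** e j) ** P"
    using center by (simp add: hermitian_def ctrans_mult matrix_mul_assoc)
  also have "\<dots> = ctrans P ** ctrans (A ** (e j ** e k)) ** P"
    by (simp add: ctrans_mult matrix_mul_assoc)
  also have "\<dots> = 0"
    using orth \<open>k \<noteq> j\<close> by simp
  finally have "(mat_unit k ** (ctrans P ** A ** P) ** mat_unit j) $ k $ j = 0"
    by simp
  then show "(ctrans P ** A ** P) $ k $ j = 0"
    by (simp add: matrix_mult_mat_unit_entry mat_unit_mult_entry)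
qed

lemma congruence_diagonal_if_center_idempotents:
  fixes A :: "nat \<Rightarrow> complex^'n^'n" and e :: "'n \<Rightarrow> complex^'n^'n"
  assumes e: "\<forall>j. e j \<in> center m A \<and> e j \<noteq> 0 \<and> e j ** e j = e j"
    and orth: "\<forall>j l. j \<noteq> l \<longrightarrow> e j ** e l = 0"
  shows "\<exists>P. invertible P \<and> (\<forall>i<m. diagonal_mat (ctrans P ** A i ** P))"
proof -
  have "\<exists>c r. e j $ r $ c \<noteq> 0" for j
    using e by (metis vec_eq_iff zero_index)
  then obtain c where c: "\<And>j. \<exists>r. e j $ r $ c j \<noteq> 0"
    by metis
  define P where "P = (\<chi> r j. e j $ r $ c j)"
  have intertwine: "e k ** P = P ** mat_unit k" for k
    unfolding P_def using e orth by (intro idempotent_columns_intertwine) auto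
  have "invertible P"
    using c by (intro invertible_if_intertwines_mat_units[OF intertwine]) (simp add: P_def)
  moreover have "diagonal_mat (ctrans P ** A i ** P)" if "i < m" for i
    using e orth \<open>i < m\<close>
    by (intro diagonal_congruence_if_intertwines[OF intertwine]) (auto simp: mem_center_iff)
  ultimately show ?thesis by blast
qed

theorem mainTheorem9:
  fixes m :: nat and A :: "nat \<Rightarrow> complex^'n^'n"
  assumes "\<forall>i<m. hermitian (A i)"
  shows "(\<exists>P. invertible P \<and> (\<forall>i<m. diagonal_mat (ctrans P ** A i ** P)))
     \<longleftrightarrow> (\<exists>\<epsilon> :: 'n \<Rightarrow> complex^'n^'n.
            (\<forall>j. \<epsilon> j \<in> center m A \<and> \<epsilon> j \<noteq> 0 \<and> \<epsilon> j ** \<epsilon> j = \<epsilon> j)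
          \<and> (\<forall>j l. j \<noteq> l \<longrightarrow> \<epsilon> j ** \<epsilon> l = 0)
          \<and> (\<Sum>j\<in>UNIV. \<epsilon> j) = mat 1)"
  by (rule iffI; elim exE conjE)
    (erule (1) center_idempotents_if_congruence_diagonal[OF assms],
     erule (1) congruence_diagonal_if_center_idempotents)

end
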